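(* Let $G^-$ and $G^+$ be entire functions with $G^-(1/2)=G^+(1/2)$ and $(G^-)'(1/2)\ne(G^+)'(1/2)$, and let $g^\pm:\mathbb R\to\mathbb C$ be the continuous function $g^\pm(b)=G^-(b)$ for $b<1/2$, $g^\pm(b)=G^+(b)$ for $b\ge1/2$. Let $0<\eta<1/2$. Then there exist an open neighbourhood $V^-_\eta$ of $0$ in $\mathbb C$ and an open neighbourhood $V^+_\eta$ of $1$ in $\mathbb C$ such that for every $b'\in[-\eta,\eta]$ and every sequence $\boldsymbol\epsilon=(\epsilon_N)_{N\ge1}$ with $\epsilon_N\in[0,1)$, $\epsilon_N\to0$, the polynomials $$P_N(z)=\sum_{\nu=0}^N\binom N\nu z^\nu(1-z)^{N-\nu}\,g^\pm\Big(b'+\nu\,\frac{1-\epsilon_N}{N}\Big)$$ converge uniformly on every compact subset of $V^-_\eta$ to $z\mapsto G^-(z+b')$ and uniformly on every compact subset of $V^+_\eta$ to $z\mapsto G^+(z+b')$, the convergence being uniform with respect to $b'\in[-\eta,\eta]$. Moreover, if $\{\boldsymbol\epsilon_{\iota'}:\iota'\in I'\}$ is a family of such sequences with $\sup_{\iota'}\epsilon_{\iota',N}\to0$ as $N\to\infty$, then these convergences (with $\boldsymbol\epsilon_{\iota'}$ in place of $\boldsymbol\epsilon$) on compact subsets of $V^-_\eta$ and of $V^+_\eta$ are also uniform with respect to $\iota'$. *)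

theory Defs
  imports "HOL-Analysis.Analysis"
begin

definition gpm :: "(complex \<Rightarrow> complex) \<Rightarrow> (complex \<Rightarrow> complex) \<Rightarrow> real \<Rightarrow> complex" where
  "gpm Gm Gp b = (if b < 1/2 then Gm (complex_of_real b) else Gp (complex_of_real b))"

definition PN :: "(complex \<Rightarrow> complex) \<Rightarrow> (complex \<Rightarrow> complex) \<Rightarrow> real \<Rightarrow> real \<Rightarrow> nat \<Rightarrow> complex \<Rightarrow> complex" where
  "PN Gm Gp b' e N z = (\<Sum>\<nu>=0..N. of_nat (N choose \<nu>) * z ^ \<nu> * (1 - z) ^ (N - \<nu>)
       * gpm Gm Gp (b' + real \<nu> * (1 - e) / real N))"

end

(* P_N is the Bernstein operator of degree N applied to g at the nodes b' + nu (1 - eps_N) / N: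
   at z it averages these values with the weights B_nu(z) = (N choose nu) z^nu (1 - z)^(N - nu).

   For an entire G and small |z|, Cauchy's formula on the circle |u - y| = 3 reduces the comparison
   of sum_nu B_nu(z) G(y + nu h) with G(y + N h z) to the same comparison for the kernel
   1 / (U - t) with |U| = 3.  Expanding 1 / (U - nu h) in forward differences with respect to nu,
   and 1 / (U - N h z) as a geometric series in N h z / U, the two sides agree term by term up to
   O(1/N).

   Near z = 0, the nodes beyond 1/2, where g switches from G^- to G^+, all satisfy nu >= N / k,
   and for |z| <= 1 / (4^k + 1) their total Bernstein weight is at most 2^-N.  Hence P_N is close
   to G^-(b' + (1 - eps_N) z), which is close to G^-(z + b').  Near z = 1 the same argument
   applies after the reflection z -> 1 - z, nu -> N - nu.  All bounds depend on eps_N only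
   through its size, which gives the uniformity over families. *)

theory Submission
  imports Defs "HOL-Complex_Analysis.Cauchy_Integral_Formula"
begin

section \<open>Newton expansion of the Cauchy kernel\<close>

fun pole_prod :: "complex \<Rightarrow> complex \<Rightarrow> nat \<Rightarrow> complex" where
  "pole_prod U h 0 = U"
| "pole_prod U h (Suc j) = pole_prod U h j * (U - of_nat (Suc j) * h)"

text \<open>\<^term>\<open>newton_coeff U h j\<close> is the \<open>j\<close>-th forward difference of \<open>\<nu> \<mapsto> 1 / (U - \<nu> h)\<close> at \<open>\<nu> = 0\<close>.\<close>

definition newton_coeff :: "complex \<Rightarrow> complex \<Rightarrow> nat \<Rightarrow> complex" where
  "newton_coeff U h j = fact j * h ^ j / pole_prod U h j"

lemma pole_prod_shift: "U * pole_prod (U - h) h j = pole_prod U h (Suc j)"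
proof (induction j)
  case (Suc j)
  have "U * pole_prod (U - h) h (Suc j) = (U * pole_prod (U - h) h j) * (U - of_nat (Suc (Suc j)) * h)"
    by (simp add: algebra_simps)
  then show ?case
    by (simp only: Suc pole_prod.simps(2)[of U h "Suc j"])
qed (simp add: algebra_simps)

lemma pole_prod_nonzero_le: "pole_prod U h n \<noteq> 0 \<Longrightarrow> j \<le> n \<Longrightarrow> pole_prod U h j \<noteq> 0"
  by (induction n) (auto simp: le_Suc_eq)

lemma newton_coeff_diff:
  assumes "pole_prod U h (Suc j) \<noteq> 0"
  shows "newton_coeff (U - h) h j - newton_coeff U h j = newton_coeff U h (Suc j)"
proof -
  define a where "a = U - of_nat (Suc j) * h"
  have U: "U \<noteq> 0" and P: "pole_prod U h j \<noteq> 0" and a: "a \<noteq> 0"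
    using pole_prod_nonzero_le[OF assms, of 0] pole_prod_nonzero_le[OF assms, of j] assms
    by (auto simp: a_def)
  have shift: "pole_prod (U - h) h j = pole_prod U h j * a / U"
    using pole_prod_shift[of U h j] U by (simp add: a_def field_simps)
  have "U - a = of_nat (Suc j) * h"
    by (simp add: a_def)
  then show ?thesis
    using U P a unfolding newton_coeff_def shift by (simp add: a_def[symmetric] field_simps)
qed

lemma sum_choose_Suc:
  fixes a :: "nat \<Rightarrow> complex"
  shows "(\<Sum>j=0..Suc n. of_nat (Suc n choose j) * a j) = (\<Sum>j=0..n. of_nat (n choose j) * (a j + a (Suc j)))"
proof -
  have A: "(\<Sum>j=0..Suc n. of_nat (Suc n choose j) * a j)
      = a 0 + (\<Sum>i=0..n. of_nat (n choose i) * a (Suc i)) + (\<Sum>i=0..n. of_nat (n choose Suc i) * a (Suc i))"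
    by (subst sum.atLeast0_atMost_Suc_shift) (simp add: sum.distrib algebra_simps)
  have "(\<Sum>j=0..n. of_nat (n choose j) * a j) = (\<Sum>j=0..Suc n. of_nat (n choose j) * a j)"
    by simp
  also have "\<dots> = a 0 + (\<Sum>i=0..n. of_nat (n choose Suc i) * a (Suc i))"
    by (subst sum.atLeast0_atMost_Suc_shift) simp
  finally have B: "(\<Sum>j=0..n. of_nat (n choose j) * a j) = \<dots>" .
  show ?thesis
    unfolding A distrib_left sum.distrib B by (simp add: algebra_simps)
qed

lemma inverse_newton_expansion:
  "pole_prod U h n \<noteq> 0 \<Longrightarrow> 1 / (U - of_nat n * h) = (\<Sum>j=0..n. of_nat (n choose j) * newton_coeff U h j)"
proof (induction n arbitrary: U)
  case 0
  then show ?case by (simp add: newton_coeff_def)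
next
  case (Suc n)
  have "newton_coeff U h j + newton_coeff U h (Suc j) = newton_coeff (U - h) h j" if "j \<le> n" for j
    using newton_coeff_diff[of U h j] pole_prod_nonzero_le[OF Suc.prems, of "Suc j"] that
    by (metis Suc_le_mono add.commute diff_add_cancel)
  then have "(\<Sum>j=0..Suc n. of_nat (Suc n choose j) * newton_coeff U h j)
      = (\<Sum>j=0..n. of_nat (n choose j) * newton_coeff (U - h) h j)"
    unfolding sum_choose_Suc by (intro sum.cong) auto
  also have "\<dots> = 1 / (U - h - of_nat n * h)"
    using Suc.IH[of "U - h"] Suc.prems pole_prod_shift[of U h n] by (metis mult_zero_right)
  finally show ?case by (simp add: algebra_simps)
qed

definition bernstein_basis :: "nat \<Rightarrow> nat \<Rightarrow> complex \<Rightarrow> complex" where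
  "bernstein_basis N \<nu> w = of_nat (N choose \<nu>) * w ^ \<nu> * (1 - w) ^ (N - \<nu>)"

lemma bernstein_choose_sum:
  assumes "j \<le> N"
  shows "(\<Sum>\<nu>=0..N. bernstein_basis N \<nu> w * of_nat (\<nu> choose j)) = of_nat (N choose j) * w ^ j"
proof -
  define f where "f \<nu> = bernstein_basis N \<nu> w * of_nat (\<nu> choose j)" for \<nu>
  have "(\<Sum>\<nu>=0..N. f \<nu>) = (\<Sum>\<nu>=j..N. f \<nu>)"
    by (rule sum.mono_neutral_right) (auto simp: f_def)
  also have "\<dots> = (\<Sum>i=0..N-j. f (i + j))"
    using sum.shift_bounds_cl_nat_ivl[of f 0 j "N-j"] assms by simp
  also have "\<dots> = (\<Sum>i=0..N-j. of_nat (N choose j) * w^j * (of_nat ((N-j) choose i) * w^i * (1-w)^((N-j)-i)))"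
  proof (rule sum.cong[OF refl])
    fix i assume "i \<in> {0..N-j}"
    then have "(N choose (i+j)) * ((i+j) choose j) = (N choose j) * ((N-j) choose i)"
      using choose_mult[of j "i+j" N] assms by simp
    moreover have "N - (i + j) = N - j - i"
      by simp
    ultimately show "f (i+j) = of_nat (N choose j) * w^j * (of_nat ((N-j) choose i) * w^i * (1-w)^((N-j)-i))"
      unfolding f_def bernstein_basis_def by (simp add: power_add algebra_simps flip: of_nat_mult)
  qed
  also have "\<dots> = of_nat (N choose j) * w^j * (w + (1 - w))^(N-j)"
    by (simp only: binomial_ring[of w "1-w"] atMost_atLeast0 sum_distrib_left)
  finally show ?thesis by (simp add: f_def)
qed

lemma bernstein_inverse_expansion:
  assumes "pole_prod U h N \<noteq> 0"
  shows "(\<Sum>\<nu>=0..N. bernstein_basis N \<nu> w / (U - of_nat \<nu> * h))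
       = (\<Sum>j=0..N. of_nat (N choose j) * w^j * newton_coeff U h j)"
proof -
  have "1 / (U - of_nat \<nu> * h) = (\<Sum>j=0..N. of_nat (\<nu> choose j) * newton_coeff U h j)" if "\<nu> \<le> N" for \<nu>
  proof -
    have "1 / (U - of_nat \<nu> * h) = (\<Sum>j=0..\<nu>. of_nat (\<nu> choose j) * newton_coeff U h j)"
      using inverse_newton_expansion pole_prod_nonzero_le[OF assms that] by blast
    also have "\<dots> = (\<Sum>j=0..N. of_nat (\<nu> choose j) * newton_coeff U h j)"
      by (rule sum.mono_neutral_left) (use that in auto)
    finally show ?thesis .
  qed
  then have "(\<Sum>\<nu>=0..N. bernstein_basis N \<nu> w / (U - of_nat \<nu> * h))
      = (\<Sum>\<nu>=0..N. \<Sum>j=0..N. bernstein_basis N \<nu> w * of_nat (\<nu> choose j) * newton_coeff U h j)"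
    by (intro sum.cong refl) (simp add: divide_inverse sum_distrib_left mult.assoc flip: inverse_eq_divide)
  also have "\<dots> = (\<Sum>j=0..N. (\<Sum>\<nu>=0..N. bernstein_basis N \<nu> w * of_nat (\<nu> choose j)) * newton_coeff U h j)"
    by (subst sum.swap) (simp add: sum_distrib_right)
  also have "\<dots> = (\<Sum>j=0..N. of_nat (N choose j) * w^j * newton_coeff U h j)"
    by (intro sum.cong refl) (simp add: bernstein_choose_sum)
  finally show ?thesis .
qed

section \<open>Estimates for the Bernstein average of the Cauchy kernel\<close>

lemma norm_node_le:
  assumes "of_nat N * norm h \<le> 1" and "\<nu> \<le> N"
  shows "norm (of_nat \<nu> * h :: complex) \<le> 1"
proof -
  have "norm (of_nat \<nu> * h) = real \<nu> * norm h"
    by (simp only: norm_mult norm_of_nat)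
  also have "\<dots> \<le> real N * norm h"
    using assms by (intro mult_right_mono) auto
  finally show ?thesis
    using assms by simp
qed

lemma norm_scaled_point_le:
  assumes "of_nat N * norm h \<le> 1" and "norm w \<le> 1/2"
  shows "norm (of_nat N * h * w :: complex) \<le> 1/2"
proof -
  have "norm (of_nat N * h * w) = (real N * norm h) * norm w"
    by (simp add: norm_mult)
  also have "\<dots> \<le> 1 * (1/2)"
    using assms by (intro mult_mono) auto
  finally show ?thesis
    by simp
qed

lemma norm_pole_factor_bounds:
  fixes U h :: complex
  assumes U: "norm U = 3" and hN: "of_nat N * norm h \<le> 1" and iN: "i \<le> N"
  shows "2 \<le> norm (U - of_nat i * h)" "norm (U - of_nat i * h) \<le> 4"
  using norm_node_le[OF hN iN] norm_triangle_ineq2[of U "of_nat i * h"] norm_triangle_ineq4[of U "of_nat i * h"] U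
  by auto

lemma norm_pole_prod_bounds:
  fixes U h :: complex
  assumes U: "norm U = 3" and hN: "of_nat N * norm h \<le> 1" and jN: "j \<le> N"
  shows "2 ^ Suc j \<le> norm (pole_prod U h j) \<and> norm (pole_prod U h j) \<le> 4 ^ Suc j"
  using jN
proof (induction j)
  case (Suc j)
  note factor = norm_pole_factor_bounds[OF U hN Suc.prems]
  have "(2::real) ^ Suc j * 2 \<le> norm (pole_prod U h j) * norm (U - of_nat (Suc j) * h)"
    using Suc factor by (intro mult_mono) auto
  moreover have "norm (pole_prod U h j) * norm (U - of_nat (Suc j) * h) \<le> 4 ^ Suc j * 4"
    using Suc factor by (intro mult_mono) auto
  ultimately show ?case
    by (simp add: norm_mult)
qed (use U in simp)

lemma pole_prod_nonzero:
  "norm U = 3 \<Longrightarrow> of_nat N * norm h \<le> 1 \<Longrightarrow> j \<le> N \<Longrightarrow> pole_prod U h j \<noteq> 0"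
  using norm_pole_prod_bounds[of U N h j] by (metis norm_zero not_le zero_less_numeral zero_less_power)

lemma norm_power_diff_pole_prod:
  fixes U h :: complex
  assumes U: "norm U = 3" and hN: "of_nat N * norm h \<le> 1" and jN: "j \<le> N"
  shows "norm (U ^ Suc j - pole_prod U h j) \<le> (real j + 1)^2 * norm h * 4 ^ j"
  using jN
proof (induction j)
  case (Suc j)
  have eq: "U ^ Suc (Suc j) - pole_prod U h (Suc j)
      = (U ^ Suc j - pole_prod U h j) * U + pole_prod U h j * (of_nat (Suc j) * h)"
    by (simp add: algebra_simps)
  have "norm (of_nat (Suc j) * h) = (real j + 1) * norm h"
    by (simp only: norm_mult norm_of_nat) simp
  then have "norm (U ^ Suc (Suc j) - pole_prod U h (Suc j))
      \<le> norm (U ^ Suc j - pole_prod U h j) * 3 + norm (pole_prod U h j) * ((real j + 1) * norm h)"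
    unfolding eq using U by (intro order.trans[OF norm_triangle_ineq]) (simp only: norm_mult)
  also have "\<dots> \<le> (real j + 1)^2 * norm h * 4 ^ j * 3 + 4 ^ Suc j * ((real j + 1) * norm h)"
    using Suc norm_pole_prod_bounds[OF U hN, of j] by (intro add_mono mult_right_mono) auto
  also have "\<dots> \<le> (real (Suc j) + 1)^2 * norm h * 4 ^ Suc j"
    by (simp add: power2_eq_square algebra_simps mult_left_mono)
  finally show ?case .
qed simp

definition falling_ratio :: "nat \<Rightarrow> nat \<Rightarrow> real" where
  "falling_ratio N j = real (N choose j) * fact j / real N ^ j"

lemma falling_ratio_Suc:
  assumes "j < N"
  shows "falling_ratio N (Suc j) = falling_ratio N j * (real N - real j) / real N"
proof -
  have "N - j = Suc (N - Suc j)"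
    using assms by simp
  then have fact_eq: "fact (N - j) = real (N - j) * (fact (N - Suc j) :: real)"
    by (simp only: fact_Suc)
  have Fj: "falling_ratio N j = fact N / (fact (N - j) * real N ^ j)"
    unfolding falling_ratio_def using fact_binomial[of j N] assms by (simp add: field_simps)
  have FSj: "falling_ratio N (Suc j) = fact N / (fact (N - Suc j) * real N ^ Suc j)"
    unfolding falling_ratio_def using fact_binomial[of "Suc j" N] assms
    by (simp add: field_simps del: fact_Suc)
  show ?thesis
    unfolding Fj FSj fact_eq using assms by (simp add: field_simps)
qed

lemma falling_ratio_bounds:
  assumes "j \<le> N"
  shows "0 \<le> falling_ratio N j \<and> falling_ratio N j \<le> 1 \<and> 1 - falling_ratio N j \<le> real j ^ 2 / real N"
  using assms
proof (induction j)
  case (Suc j)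
  then have jN: "j < N" and N: "real N > 0" and IH: "0 \<le> falling_ratio N j" "falling_ratio N j \<le> 1"
      "1 - falling_ratio N j \<le> real j ^ 2 / real N"
    by auto
  have "falling_ratio N j * (real N - real j) \<le> 1 * real N"
    using IH jN by (intro mult_mono) auto
  then have upper: "falling_ratio N (Suc j) \<le> 1"
    using N by (simp add: falling_ratio_Suc[OF jN] divide_le_eq)
  have "1 - falling_ratio N (Suc j) = (1 - falling_ratio N j) + falling_ratio N j * real j / real N"
    using N by (simp add: falling_ratio_Suc[OF jN] field_simps)
  also have "\<dots> \<le> real j ^ 2 / real N + 1 * real j / real N"
    using IH N by (intro add_mono divide_right_mono mult_right_mono) auto
  also have "\<dots> \<le> real (Suc j) ^ 2 / real N"
    using N by (simp add: power2_eq_square field_simps)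
  finally show ?case
    using IH jN upper by (simp add: falling_ratio_Suc[OF jN])
qed (simp add: falling_ratio_def)

lemma norm_falling_ratio_minus_one_le:
  assumes "j \<le> N"
  shows "norm (of_real (falling_ratio N j) - 1 :: complex) \<le> (real j + 1)^2 / real N"
proof -
  have "norm (of_real (falling_ratio N j) - 1 :: complex) = norm (of_real (falling_ratio N j - 1) :: complex)"
    by simp
  also have "\<dots> = 1 - falling_ratio N j"
    using falling_ratio_bounds[OF assms] by (simp only: norm_of_real) simp
  also have "\<dots> \<le> real j ^ 2 / real N"
    using falling_ratio_bounds[OF assms] by simp
  also have "\<dots> \<le> (real j + 1)^2 / real N"
    by (intro divide_right_mono power_mono) auto
  finally show ?thesis .
qed

lemma square_Suc_le_pow2: "(real j + 1)^2 \<le> 4 * 2 ^ j"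
proof (induction j)
  case (Suc j)
  show ?case
  proof (cases "j \<le> 1")
    case True
    then have "j = 0 \<or> j = 1"
      by auto
    then show ?thesis
      by auto
  next
    case False
    then have "2 * 2 \<le> real j * real j"
      by (intro mult_mono) auto
    then have "(real (Suc j) + 1)^2 \<le> 2 * (real j + 1)^2"
      by (simp add: power2_eq_square algebra_simps)
    also have "\<dots> \<le> 2 * (4 * 2 ^ j)"
      using Suc by simp
    finally show ?thesis
      by simp
  qed
qed simp

lemma geometric_weights_le:
  fixes c :: real
  assumes "c \<ge> 0"
  shows "(1/2)^j * (c / 2 ^ Suc j + c * 4 ^ j / (2 ^ Suc j * 3 ^ Suc j)) \<le> c * (1/3)^j"
proof -
  have "(1/2::real)^j / 2 ^ Suc j = (1/4)^j / 2"
    by (simp add: power_divide field_simps flip: power_mult_distrib)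
  moreover have "(1/2::real)^j * 4 ^ j / (2 ^ Suc j * 3 ^ Suc j) = (1/3)^j / 6"
    by (simp add: power_divide field_simps flip: power_mult_distrib)
  ultimately have "(1/2)^j * (c / 2 ^ Suc j + c * 4 ^ j / (2 ^ Suc j * 3 ^ Suc j))
      = c * ((1/4)^j / 2 + (1/3)^j / 6)"
    by (simp add: field_simps)
  also have "\<dots> \<le> c * ((1/3)^j / 2 + (1/3)^j / 6)"
    using assms by (intro mult_left_mono add_right_mono divide_right_mono power_mono) auto
  also have "\<dots> \<le> c * (1/3)^j"
    using assms by (intro mult_left_mono) auto
  finally show ?thesis .
qed

lemma newton_term_eq:
  fixes U h w :: complex
  assumes "N \<ge> 1"
  shows "of_nat (N choose j) * w ^ j * newton_coeff U h j
       = of_real (falling_ratio N j) * (of_nat N * h * w) ^ j / pole_prod U h j"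
proof -
  have "of_real (falling_ratio N j) * (of_nat N * h * w) ^ j / pole_prod U h j
      = of_nat (N choose j) * fact j / of_nat N ^ j * (of_nat N ^ j * h ^ j * w ^ j) / pole_prod U h j"
    by (simp add: falling_ratio_def power_mult_distrib)
  also have "\<dots> = of_nat (N choose j) * w ^ j * newton_coeff U h j"
    using assms by (simp add: newton_coeff_def field_simps)
  finally show ?thesis ..
qed

lemma newton_term_estimate:
  fixes U h w :: complex
  assumes N1: "N \<ge> 1" and U: "norm U = 3" and hN: "of_nat N * norm h \<le> 1"
    and w: "norm w \<le> 1/2" and jN: "j \<le> N"
  shows "norm (of_nat (N choose j) * w^j * newton_coeff U h j - (of_nat N * h * w)^j / U^Suc j)
       \<le> 4 * (2/3)^j / real N"
proof -
  define P where "P = pole_prod U h j"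
  define F where "F = falling_ratio N j"
  define x where "x = of_nat N * h * w"
  define c where "c = (real j + 1)^2 / real N"
  have N: "real N > 0" and c: "c \<ge> 0"
    using N1 by (auto simp: c_def)
  have P: "2 ^ Suc j \<le> norm P" and P0: "P \<noteq> 0"
    using norm_pole_prod_bounds[OF U hN jN] pole_prod_nonzero[OF U hN jN] by (auto simp: P_def)
  have U0: "U \<noteq> 0"
    using U by auto
  have x: "norm x ^ j \<le> (1/2)^j"
    using norm_scaled_point_le[OF hN w] by (intro power_mono) (auto simp: x_def)
  have "norm (of_real F - 1 :: complex) / norm P \<le> c / 2 ^ Suc j"
    using norm_falling_ratio_minus_one_le[OF jN] P c by (intro frac_le) (auto simp: F_def c_def)
  moreover have "norm h \<le> 1 / real N"
    using hN N by (simp add: field_simps)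
  then have "(real j + 1)^2 * norm h * 4 ^ j \<le> (real j + 1)^2 * (1 / real N) * 4 ^ j"
    by (intro mult_right_mono mult_left_mono) auto
  then have "norm (U ^ Suc j - P) \<le> c * 4 ^ j"
    using norm_power_diff_pole_prod[OF U hN jN] by (simp add: P_def c_def)
  then have "norm (U ^ Suc j - P) / (norm P * 3 ^ Suc j) \<le> c * 4 ^ j / (2 ^ Suc j * 3 ^ Suc j)"
    using P c by (intro frac_le mult_right_mono) auto
  ultimately have "norm ((of_real F - 1) / P + (U ^ Suc j - P) / (P * U ^ Suc j))
      \<le> c / 2 ^ Suc j + c * 4 ^ j / (2 ^ Suc j * 3 ^ Suc j)"
    using U norm_triangle_ineq[of "(of_real F - 1) / P" "(U ^ Suc j - P) / (P * U ^ Suc j)"]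
    by (simp add: norm_divide norm_mult norm_power)
  then have "norm (x^j * ((of_real F - 1) / P + (U ^ Suc j - P) / (P * U ^ Suc j)))
      \<le> (1/2)^j * (c / 2 ^ Suc j + c * 4 ^ j / (2 ^ Suc j * 3 ^ Suc j))"
    unfolding norm_mult norm_power using x by (intro mult_mono) auto
  also have "\<dots> \<le> c * (1/3)^j"
    by (rule geometric_weights_le[OF c])
  also have "\<dots> \<le> 4 * 2 ^ j / real N * (1/3)^j"
    using N square_Suc_le_pow2[of j] unfolding c_def by (intro mult_right_mono divide_right_mono) auto
  finally have "norm (x^j * ((of_real F - 1) / P + (U ^ Suc j - P) / (P * U ^ Suc j))) \<le> 4 * (2/3)^j / real N"
    by (simp add: power_divide mult.commute)
  moreover have "x^j * ((of_real F - 1) / P + (U ^ Suc j - P) / (P * U ^ Suc j))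
      = of_nat (N choose j) * w^j * newton_coeff U h j - x^j / U^Suc j"
    using P0 U0 unfolding newton_term_eq[OF N1] by (simp add: F_def P_def x_def field_simps)
  ultimately show ?thesis
    by (simp add: x_def)
qed

lemma inverse_geometric_expansion:
  fixes U x :: complex
  assumes "U \<noteq> 0" "U \<noteq> x"
  shows "1 / (U - x) = (\<Sum>j=0..N. x^j / U^Suc j) + x^Suc N / (U^Suc N * (U - x))"
proof -
  define r where "r = x / U"
  have r: "1 - r = (U - x) / U" "1 - r \<noteq> 0"
    using assms by (simp_all add: r_def field_simps)
  have "(\<Sum>j=0..N. x^j / U^Suc j) = (1 / U) * (\<Sum>i\<le>N. r^i)"
    by (simp add: atMost_atLeast0 sum_distrib_left r_def power_divide)
  also have "(\<Sum>i\<le>N. r^i) = (1 - r^Suc N) / (1 - r)"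
    using sum_gp_basic[of r N] r(2) by (simp add: field_simps)
  finally have "(\<Sum>j=0..N. x^j / U^Suc j) = (1 - r^Suc N) / (U - x)"
    using assms unfolding r(1) by simp
  moreover have "x^Suc N / (U^Suc N * (U - x)) = r^Suc N / (U - x)"
    by (simp add: r_def power_divide)
  ultimately show ?thesis
    by (simp add: add_divide_distrib[symmetric])
qed

lemma norm_geometric_remainder_le:
  fixes U x :: complex
  assumes U: "norm U = 3" and x: "norm x \<le> 1/2" and N: "N \<ge> 1"
  shows "norm (x^Suc N / (U^Suc N * (U - x))) \<le> 1 / real N"
proof -
  have "1 \<le> norm (U - x)"
    using norm_triangle_ineq2[of U x] U x by simp
  then have "1 * 1 \<le> 3 ^ Suc N * norm (U - x)"
    by (intro mult_mono one_le_power) auto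
  moreover have "norm x ^ Suc N \<le> (1/2) ^ Suc N"
    using x by (intro power_mono) auto
  ultimately have "norm (x^Suc N / (U^Suc N * (U - x))) \<le> (1/2) ^ Suc N / (1 * 1)"
    using U by (simp only: norm_divide norm_mult norm_power) (intro frac_le, auto)
  also have "\<dots> = 1 / 2 ^ Suc N"
    by (simp add: power_divide)
  also have "\<dots> \<le> 1 / real N"
  proof (rule frac_le)
    have "real N < 2 ^ N"
      using less_exp[of N] by (metis of_nat_less_iff of_nat_numeral of_nat_power)
    moreover have "(2::real) ^ N \<le> 2 ^ Suc N"
      by simp
    ultimately show "real N \<le> 2 ^ Suc N"
      by linarith
  qed (use N in auto)
  finally show ?thesis .
qed

lemma bernstein_inverse_estimate:
  fixes U h w :: complex
  assumes N1: "N \<ge> 1" and U: "norm U = 3" and hN: "of_nat N * norm h \<le> 1" and w: "norm w \<le> 1/2"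
  shows "norm ((\<Sum>\<nu>=0..N. bernstein_basis N \<nu> w / (U - of_nat \<nu> * h)) - 1 / (U - of_nat N * h * w))
       \<le> 13 / real N"
proof -
  define x where "x = of_nat N * h * w"
  have x: "norm x \<le> 1/2"
    using norm_scaled_point_le[OF hN w] by (simp add: x_def)
  then have Ux: "U \<noteq> x" and U0: "U \<noteq> 0"
    using U by auto
  have eq: "(\<Sum>\<nu>=0..N. bernstein_basis N \<nu> w / (U - of_nat \<nu> * h)) - 1 / (U - x)
     = (\<Sum>j=0..N. of_nat (N choose j) * w^j * newton_coeff U h j - x^j / U^Suc j)
       - x^Suc N / (U^Suc N * (U - x))"
    unfolding bernstein_inverse_expansion[OF pole_prod_nonzero[OF U hN order.refl]]
      inverse_geometric_expansion[OF U0 Ux, of N] by (simp add: sum_subtractf)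
  moreover have "norm (\<Sum>j=0..N. of_nat (N choose j) * w^j * newton_coeff U h j - x^j / U^Suc j)
      \<le> (\<Sum>j=0..N. 4 * (2/3)^j / real N)"
    unfolding x_def using newton_term_estimate[OF N1 U hN w] by (intro order.trans[OF norm_sum sum_mono]) auto
  moreover have "(\<Sum>j=0..N. 4 * (2/3::real)^j / real N) \<le> 12 / real N"
  proof -
    have "(\<Sum>j=0..N. (2/3::real)^j) = 3 * (1 - (2/3)^Suc N)"
      using sum_gp_basic[of "2/3::real" N] by (simp add: atMost_atLeast0)
    then have "(\<Sum>j=0..N. (2/3::real)^j) \<le> 3"
      by simp
    then have "4 * (\<Sum>j=0..N. (2/3::real)^j) / real N \<le> 4 * 3 / real N"
      by (intro divide_right_mono) auto
    then show ?thesis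
      by (simp add: sum_divide_distrib sum_distrib_left)
  qed
  ultimately have "norm ((\<Sum>\<nu>=0..N. bernstein_basis N \<nu> w / (U - of_nat \<nu> * h)) - 1 / (U - x))
      \<le> 12 / real N + 1 / real N"
    unfolding eq using norm_geometric_remainder_le[OF U x N1] norm_triangle_ineq4 by (smt (verit))
  then show ?thesis
    by (simp add: x_def add_divide_distrib[symmetric])
qed

section \<open>Bernstein averages of holomorphic functions\<close>

lemma bernstein_cauchy_integral:
  fixes G :: "complex \<Rightarrow> complex"
  assumes holo: "G holomorphic_on cball y 3" and hN: "of_nat N * norm h \<le> 1" and w: "norm w \<le> 1/2"
  shows "((\<lambda>u. G u * ((\<Sum>\<nu>=0..N. bernstein_basis N \<nu> w / ((u - y) - of_nat \<nu> * h))
                       - 1 / ((u - y) - of_nat N * h * w)))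
         has_contour_integral 2 * of_real pi * \<i> *
           ((\<Sum>\<nu>=0..N. bernstein_basis N \<nu> w * G (y + of_nat \<nu> * h)) - G (y + of_nat N * h * w)))
         (circlepath y 3)"
proof -
  have nodes: "((\<lambda>u. G u / (u - (y + of_nat \<nu> * h))) has_contour_integral
      (2 * of_real pi * \<i> * G (y + of_nat \<nu> * h))) (circlepath y 3)" if "\<nu> \<in> {0..N}" for \<nu>
    using norm_node_le[OF hN, of \<nu>] that by (intro Cauchy_integral_circlepath_simple[OF holo]) force+
  have target: "((\<lambda>u. G u / (u - (y + of_nat N * h * w))) has_contour_integral
      (2 * of_real pi * \<i> * G (y + of_nat N * h * w))) (circlepath y 3)"
    using norm_scaled_point_le[OF hN w] by (intro Cauchy_integral_circlepath_simple[OF holo]) auto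
  have "((\<lambda>u. (\<Sum>\<nu>=0..N. bernstein_basis N \<nu> w * (G u / (u - (y + of_nat \<nu> * h))))
          - G u / (u - (y + of_nat N * h * w)))
        has_contour_integral (\<Sum>\<nu>=0..N. bernstein_basis N \<nu> w * (2 * of_real pi * \<i> * G (y + of_nat \<nu> * h)))
          - 2 * of_real pi * \<i> * G (y + of_nat N * h * w)) (circlepath y 3)"
    by (intro has_contour_integral_diff has_contour_integral_sum has_contour_integral_lmul nodes target) auto
  then show ?thesis
    by (simp add: sum_distrib_left right_diff_distrib diff_diff_eq algebra_simps)
qed

lemma bernstein_holomorphic_estimate:
  fixes G :: "complex \<Rightarrow> complex"
  assumes holo: "G holomorphic_on cball y 3" and M: "\<forall>u\<in>sphere y 3. norm (G u) \<le> M"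
    and N1: "N \<ge> 1" and hN: "of_nat N * norm h \<le> 1" and w: "norm w \<le> 1/2"
  shows "norm ((\<Sum>\<nu>=0..N. bernstein_basis N \<nu> w * G (y + of_nat \<nu> * h)) - G (y + of_nat N * h * w))
       \<le> 39 * M / real N"
proof -
  define D where "D = (\<Sum>\<nu>=0..N. bernstein_basis N \<nu> w * G (y + of_nat \<nu> * h)) - G (y + of_nat N * h * w)"
  have "y + 3 \<in> sphere y 3"
    by (simp add: dist_norm)
  then have M0: "M \<ge> 0"
    using M norm_ge_zero order.trans by blast
  have "norm (G u * ((\<Sum>\<nu>=0..N. bernstein_basis N \<nu> w / ((u - y) - of_nat \<nu> * h))
                     - 1 / ((u - y) - of_nat N * h * w))) \<le> M * (13 / real N)"
    if "norm (u - y) = 3" for u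
  proof -
    have "norm (G u) \<le> M"
      using M that by (simp add: dist_norm norm_minus_commute)
    then show ?thesis
      unfolding norm_mult using bernstein_inverse_estimate[OF N1 that hN w] M0 by (intro mult_mono) auto
  qed
  then have "norm (2 * of_real pi * \<i> * D) \<le> M * (13 / real N) * (2 * pi * 3)"
    using M0 N1 unfolding D_def
    by (intro has_contour_integral_bound_circlepath[OF bernstein_cauchy_integral[OF holo hN w]]) auto
  then have "2 * pi * norm D \<le> 2 * pi * (39 * M / real N)"
    by (simp add: norm_mult field_simps)
  then show ?thesis
    unfolding D_def by (rule mult_left_le_imp_le) (simp add: pi_gt_zero)
qed

lemma inverse_four_pow_plus_one_le_half: "1 / (4 ^ k + 1) \<le> (1/2 :: real)"
proof -
  have "(2::real) \<le> 4 ^ k + 1"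
    using one_le_power[of "4::real" k] by simp
  then show ?thesis
    by (intro divide_left_mono) (auto simp: add_pos_pos)
qed

lemma bernstein_tail_bound:
  assumes w: "norm w \<le> 1 / (4^k + 1)"
  shows "(\<Sum>\<nu>\<in>{\<nu>\<in>{0..N}. N \<le> k * \<nu>}. norm (bernstein_basis N \<nu> w)) \<le> (1/2)^N"
proof -
  define a where "a = norm w"
  have "a * (4^k + 1) \<le> 1"
    using w pos_le_divide_eq[of "4^k + 1" a 1] by (simp add: a_def add_pos_pos)
  then have a: "a \<ge> 0" "4^k * a + (1 + a) \<le> 2"
    by (simp_all add: a_def algebra_simps)
  define f where "f \<nu> = real (N choose \<nu>) * (4^k * a)^\<nu> * (1 + a)^(N-\<nu>) / 4^N" for \<nu>
  have "norm (bernstein_basis N \<nu> w) \<le> f \<nu>" if "N \<le> k * \<nu>" for \<nu>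
  proof -
    have "norm (bernstein_basis N \<nu> w) \<le> real (N choose \<nu>) * a^\<nu> * (1 + a)^(N-\<nu>)"
      using norm_triangle_ineq4[of 1 w] a
      by (auto simp: bernstein_basis_def norm_mult norm_power a_def intro!: mult_left_mono power_mono)
    also have "\<dots> = real (N choose \<nu>) * a^\<nu> * (1 + a)^(N-\<nu>) * 1"
      by simp
    also have "\<dots> \<le> real (N choose \<nu>) * a^\<nu> * (1 + a)^(N-\<nu>) * ((4^k)^\<nu> / 4^N)"
    proof (rule mult_left_mono)
      have "(4::real)^N \<le> 4^(k*\<nu>)"
        using that by (intro power_increasing) auto
      then show "1 \<le> ((4::real)^k)^\<nu> / 4^N"
        by (simp add: power_mult)
    qed (use a in auto)
    also have "\<dots> = f \<nu>"
      by (simp add: f_def power_mult_distrib)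
    finally show ?thesis .
  qed
  then have "(\<Sum>\<nu>\<in>{\<nu>\<in>{0..N}. N \<le> k * \<nu>}. norm (bernstein_basis N \<nu> w))
      \<le> (\<Sum>\<nu>\<in>{\<nu>\<in>{0..N}. N \<le> k * \<nu>}. f \<nu>)"
    by (intro sum_mono) auto
  also have "\<dots> \<le> (\<Sum>\<nu>=0..N. f \<nu>)"
    by (rule sum_mono2) (auto simp: f_def a)
  also have "\<dots> = (4^k * a + (1 + a))^N / 4^N"
    by (simp add: f_def binomial_ring atMost_atLeast0 sum_divide_distrib)
  also have "\<dots> \<le> 2^N / 4^N"
    using a by (intro divide_right_mono power_mono) auto
  also have "\<dots> = (1/2)^N"
  proof -
    have "(4::real)^N = 2^N * 2^N"
      by (simp flip: power_mult_distrib)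
    then show ?thesis
      by (simp add: power_divide)
  qed
  finally show ?thesis .
qed

lemma bernstein_perturbed_estimate:
  fixes G :: "complex \<Rightarrow> complex" and f :: "nat \<Rightarrow> complex"
  assumes holo: "G holomorphic_on cball y 3" and M: "\<forall>u\<in>cball y 3. norm (G u) \<le> M"
    and N1: "N \<ge> 1" and hN: "of_nat N * norm h \<le> 1" and w: "norm w \<le> 1 / (4^k + 1)"
    and f: "\<And>\<nu>. \<nu> \<le> N \<Longrightarrow> f \<nu> \<noteq> G (y + of_nat \<nu> * h) \<Longrightarrow> N \<le> k * \<nu> \<and> norm (f \<nu>) \<le> M"
  shows "norm ((\<Sum>\<nu>=0..N. bernstein_basis N \<nu> w * f \<nu>) - G (y + of_nat N * h * w))
       \<le> 39 * M / real N + 2 * M * (1/2)^N"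
proof -
  define p where "p \<nu> = y + of_nat \<nu> * h" for \<nu>
  have M0: "M \<ge> 0"
    using M[rule_format, of y] by (auto intro: order.trans[OF norm_ge_zero])
  have "norm ((\<Sum>\<nu>=0..N. bernstein_basis N \<nu> w * G (p \<nu>)) - G (y + of_nat N * h * w)) \<le> 39 * M / real N"
    using bernstein_holomorphic_estimate[OF holo _ N1 hN, of M w] M w inverse_four_pow_plus_one_le_half[of k]
    by (simp add: p_def)
  moreover have "norm (bernstein_basis N \<nu> w * (f \<nu> - G (p \<nu>)))
      \<le> (if N \<le> k * \<nu> then 2 * M * norm (bernstein_basis N \<nu> w) else 0)" if "\<nu> \<in> {0..N}" for \<nu>
  proof (cases "f \<nu> = G (p \<nu>)")
    case False
    have "p \<nu> \<in> cball y 3"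
      using norm_node_le[OF hN, of \<nu>] that by (simp add: p_def dist_norm)
    then have "norm (f \<nu> - G (p \<nu>)) \<le> 2 * M"
      using f[of \<nu>] False that M norm_triangle_ineq4[of "f \<nu>" "G (p \<nu>)"] by (force simp: p_def)
    then have "norm (bernstein_basis N \<nu> w * (f \<nu> - G (p \<nu>))) \<le> 2 * M * norm (bernstein_basis N \<nu> w)"
      unfolding norm_mult by (subst mult.commute) (intro mult_right_mono, auto)
    then show ?thesis
      using f[of \<nu>] False that by (simp add: p_def)
  qed (use M0 in simp)
  then have "norm (\<Sum>\<nu>=0..N. bernstein_basis N \<nu> w * (f \<nu> - G (p \<nu>)))
      \<le> (\<Sum>\<nu>=0..N. if N \<le> k * \<nu> then 2 * M * norm (bernstein_basis N \<nu> w) else 0)"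
    by (intro order.trans[OF norm_sum sum_mono])
  moreover have "\<dots> = 2 * M * (\<Sum>\<nu>\<in>{\<nu>\<in>{0..N}. N \<le> k * \<nu>}. norm (bernstein_basis N \<nu> w))"
    by (simp add: sum.inter_filter[symmetric] sum_distrib_left)
  moreover have "\<dots> \<le> 2 * M * (1/2)^N"
    using bernstein_tail_bound[OF w, of N] M0 by (intro mult_left_mono) auto
  moreover have "(\<Sum>\<nu>=0..N. bernstein_basis N \<nu> w * f \<nu>) - G (y + of_nat N * h * w)
      = (\<Sum>\<nu>=0..N. bernstein_basis N \<nu> w * (f \<nu> - G (p \<nu>)))
        + ((\<Sum>\<nu>=0..N. bernstein_basis N \<nu> w * G (p \<nu>)) - G (y + of_nat N * h * w))"
    by (simp add: sum_subtractf algebra_simps)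
  ultimately show ?thesis
    by (smt (verit) norm_triangle_ineq)
qed

section \<open>The polynomials \<open>P\<^sub>N\<close>\<close>

lemma PN_eq_bernstein:
  "PN Gm Gp b' e N z = (\<Sum>\<nu>=0..N. bernstein_basis N \<nu> z * gpm Gm Gp (b' + real \<nu> * (1 - e) / real N))"
  by (simp add: PN_def bernstein_basis_def)

lemma PN_reflect:
  "PN Gm Gp b' e N z
     = (\<Sum>\<mu>=0..N. bernstein_basis N \<mu> (1 - z) * gpm Gm Gp (b' + real (N - \<mu>) * (1 - e) / real N))"
proof -
  have "PN Gm Gp b' e N z
      = (\<Sum>\<mu>=0..N. bernstein_basis N (N - \<mu>) z * gpm Gm Gp (b' + real (N - \<mu>) * (1 - e) / real N))"
    unfolding PN_eq_bernstein by (subst sum.atLeastAtMost_rev) simp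
  also have "\<dots> = (\<Sum>\<mu>=0..N. bernstein_basis N \<mu> (1 - z) * gpm Gm Gp (b' + real (N - \<mu>) * (1 - e) / real N))"
    by (intro sum.cong refl) (auto simp: bernstein_basis_def binomial_symmetric[symmetric] mult_ac)
  finally show ?thesis .
qed

lemma norm_gpm_le:
  assumes "\<forall>u\<in>cball 0 r. norm (Gm u) \<le> M \<and> norm (Gp u) \<le> M" and "\<bar>t\<bar> \<le> r"
  shows "norm (gpm Gm Gp t) \<le> M"
  using assms by (simp add: gpm_def)

lemma exceptional_node_le:
  assumes "real N * \<bar>h\<bar> \<le> 1" and "c \<le> real \<nu> * \<bar>h\<bar>" and "1 \<le> real k * c"
  shows "N \<le> k * \<nu>"
proof -
  have "real N * c \<le> real N * (real \<nu> * \<bar>h\<bar>)"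
    using assms(2) by (intro mult_left_mono) auto
  also have "\<dots> = real \<nu> * (real N * \<bar>h\<bar>)"
    by simp
  also have "\<dots> \<le> real \<nu>"
    using assms(1) by (simp add: mult_left_le)
  finally have "real k * (real N * c) \<le> real k * real \<nu>"
    by (intro mult_left_mono) auto
  then have "real N * (real k * c) \<le> real k * real \<nu>"
    by (simp add: mult_ac)
  moreover have "real N \<le> real N * (real k * c)"
    using assms(3) by (simp add: mult_le_cancel_left1)
  ultimately show ?thesis
    by (simp flip: of_nat_mult)
qed

lemma PN_estimate_near_0:
  fixes Gm Gp :: "complex \<Rightarrow> complex"
  assumes holo: "Gm holomorphic_on cball 0 5" and M: "\<forall>u\<in>cball 0 5. norm (Gm u) \<le> M \<and> norm (Gp u) \<le> M"
    and \<eta>: "0 < \<eta>" "\<eta> < 1/2" and k: "1 \<le> real k * (1/2 - \<eta>)"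
    and N1: "N \<ge> 1" and e: "0 \<le> e" "e < 1" and b': "b' \<in> {-\<eta>..\<eta>}" and z: "norm z \<le> 1 / (4^k + 1)"
  shows "norm (PN Gm Gp b' e N z - Gm (of_real b' + (1 - of_real e) * z)) \<le> 39 * M / real N + 2 * M * (1/2)^N"
proof -
  define h where "h = (1 - e) / real N"
  have N: "real N > 0"
    using N1 by simp
  have hN: "real N * h \<le> 1" and h: "0 \<le> h"
    using e N by (simp_all add: h_def)
  have ball: "cball (of_real b') 3 \<subseteq> cball (0::complex) 5"
    using b' \<eta> by (intro cball_subset_cball_iff[THEN iffD2]) (auto simp: dist_norm)
  have "of_nat N * norm (of_real h :: complex) \<le> 1"
    using hN h by simp
  moreover have "N \<le> k * \<nu> \<and> norm (gpm Gm Gp (b' + real \<nu> * (1 - e) / real N)) \<le> M"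
    if "\<nu> \<le> N" "gpm Gm Gp (b' + real \<nu> * (1 - e) / real N) \<noteq> Gm (of_real b' + of_nat \<nu> * of_real h)" for \<nu>
  proof
    have t: "b' + real \<nu> * (1 - e) / real N = b' + real \<nu> * h"
      by (simp add: h_def)
    have "real \<nu> * h \<le> real N * h"
      using that(1) h by (intro mult_right_mono) auto
    moreover have "\<not> b' + real \<nu> * h < 1/2"
      using that(2) by (auto simp: gpm_def t)
    ultimately show "N \<le> k * \<nu>"
      using b' h hN k by (intro exceptional_node_le[of N h "1/2 - \<eta>"]) (auto simp: abs_of_nonneg)
    have "0 \<le> real \<nu> * h"
      using h by simp
    then have "\<bar>b' + real \<nu> * h\<bar> \<le> 5"
      using b' \<eta> hN \<open>real \<nu> * h \<le> real N * h\<close> unfolding abs_le_iff atLeastAtMost_iff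
      by (intro conjI) linarith+
    then show "norm (gpm Gm Gp (b' + real \<nu> * (1 - e) / real N)) \<le> M"
      unfolding t by (rule norm_gpm_le[OF M])
  qed
  ultimately have "norm ((\<Sum>\<nu>=0..N. bernstein_basis N \<nu> z * gpm Gm Gp (b' + real \<nu> * (1 - e) / real N))
      - Gm (of_real b' + of_nat N * of_real h * z)) \<le> 39 * M / real N + 2 * M * (1/2)^N"
    using ball holo M by (intro bernstein_perturbed_estimate[OF _ _ N1 _ z]) (auto intro: holomorphic_on_subset)
  moreover have "of_nat N * of_real h = (1 - of_real e :: complex)"
    using N by (simp add: h_def)
  ultimately show ?thesis
    by (simp add: PN_eq_bernstein)
qed

lemma PN_estimate_near_1:
  fixes Gm Gp :: "complex \<Rightarrow> complex"
  assumes holo: "Gp holomorphic_on cball 0 5" and M: "\<forall>u\<in>cball 0 5. norm (Gm u) \<le> M \<and> norm (Gp u) \<le> M"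
    and \<eta>: "0 < \<eta>" "\<eta> < 1/2" and k: "2 \<le> real k * (1/2 - \<eta>)"
    and N1: "N \<ge> 1" and e: "0 \<le> e" "e < (1/2 - \<eta>) / 2" and b': "b' \<in> {-\<eta>..\<eta>}"
    and z: "norm (z - 1) \<le> 1 / (4^k + 1)"
  shows "norm (PN Gm Gp b' e N z - Gp (of_real b' + (1 - of_real e) * z)) \<le> 39 * M / real N + 2 * M * (1/2)^N"
proof -
  define h where "h = (1 - e) / real N"
  define y where "y = b' + (1 - e)"
  have N: "real N > 0"
    using N1 by simp
  have hN: "real N * h = 1 - e" and h: "0 \<le> h"
    using e \<eta> N by (simp_all add: h_def)
  have node: "b' + real (N - \<mu>) * (1 - e) / real N = y - real \<mu> * h" if "\<mu> \<le> N" for \<mu>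
    using that N by (simp add: h_def y_def of_nat_diff field_simps)
  have "\<bar>y\<bar> \<le> 2"
    using b' \<eta> e unfolding y_def abs_le_iff by auto
  then have ball: "cball (of_real y) 3 \<subseteq> cball (0::complex) 5"
    by (intro cball_subset_cball_iff[THEN iffD2]) (simp add: dist_norm)
  have "of_nat N * norm (of_real (- h) :: complex) \<le> 1"
    using hN h e by simp
  moreover have "norm (1 - z) \<le> 1 / (4^k + 1)"
    using z by (simp add: norm_minus_commute)
  moreover have "N \<le> k * \<mu> \<and> norm (gpm Gm Gp (b' + real (N - \<mu>) * (1 - e) / real N)) \<le> M"
    if "\<mu> \<le> N" "gpm Gm Gp (b' + real (N - \<mu>) * (1 - e) / real N) \<noteq> Gp (of_real y + of_nat \<mu> * of_real (- h))"
    for \<mu>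
  proof
    have "real \<mu> * h \<le> real N * h" "0 \<le> real \<mu> * h"
      using that(1) h by (auto intro: mult_right_mono)
    moreover have "y - real \<mu> * h < 1/2"
      using that(2) unfolding node[OF that(1)] gpm_def by (auto split: if_splits)
    ultimately show "N \<le> k * \<mu>"
      using b' h hN e k by (intro exceptional_node_le[of N "- h" "(1/2 - \<eta>) / 2"]) (auto simp: y_def)
    have "\<bar>y - real \<mu> * h\<bar> \<le> 5"
      using b' \<eta> e hN \<open>real \<mu> * h \<le> real N * h\<close> \<open>0 \<le> real \<mu> * h\<close>
      unfolding abs_le_iff atLeastAtMost_iff y_def by (intro conjI) linarith+
    then show "norm (gpm Gm Gp (b' + real (N - \<mu>) * (1 - e) / real N)) \<le> M"
      unfolding node[OF that(1)] by (rule norm_gpm_le[OF M])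
  qed
  ultimately have "norm ((\<Sum>\<mu>=0..N. bernstein_basis N \<mu> (1 - z) * gpm Gm Gp (b' + real (N - \<mu>) * (1 - e) / real N))
      - Gp (of_real y + of_nat N * of_real (- h) * (1 - z))) \<le> 39 * M / real N + 2 * M * (1/2)^N"
    using ball holo M by (intro bernstein_perturbed_estimate[OF _ _ N1]) (auto intro: holomorphic_on_subset)
  moreover have "of_real y + of_nat N * of_real (- h) * (1 - z) = of_real b' + (1 - of_real e) * (z :: complex)"
  proof -
    have Nh: "of_nat N * of_real (- h) = (of_real (- (1 - e)) :: complex)"
      using hN by (metis minus_mult_right of_real_mult of_real_of_nat_eq)
    show ?thesis
      by (simp only: Nh) (simp add: y_def algebra_simps)
  qed
  ultimately show ?thesis
    by (simp add: PN_reflect)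
qed

lemma bounded_pair_on_compact:
  fixes f g :: "'a::topological_space \<Rightarrow> 'b::real_normed_vector"
  assumes "compact S" "continuous_on S f" "continuous_on S g"
  shows "\<exists>M. \<forall>u\<in>S. norm (f u) \<le> M \<and> norm (g u) \<le> M"
proof -
  obtain M1 M2 where "\<forall>u\<in>S. norm (f u) \<le> M1" "\<forall>u\<in>S. norm (g u) \<le> M2"
    using compact_continuous_image[THEN compact_imp_bounded, OF assms(2,1)]
      compact_continuous_image[THEN compact_imp_bounded, OF assms(3,1)]
    by (auto simp: bounded_iff)
  then show ?thesis
    by (intro exI[of _ "max M1 M2"]) fastforce
qed

lemma shrunk_point_bounds:
  assumes b': "\<bar>b'\<bar> \<le> 1/2" and z: "norm z \<le> 3/2" and e: "0 \<le> e" "e \<le> 1"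
  shows "of_real b' + (1 - of_real e) * z \<in> cball (0::complex) 2" "z + of_real b' \<in> cball (0::complex) 2"
    "dist (of_real b' + (1 - of_real e) * z) (z + of_real b') \<le> e * (3/2)"
proof -
  have "norm (1 - of_real e :: complex) = norm (of_real (1 - e) :: complex)"
    by simp
  also have "\<dots> = 1 - e"
    using e by (simp only: norm_of_real)
  finally have "norm (of_real b' + (1 - of_real e) * z) \<le> \<bar>b'\<bar> + (1 - e) * norm z"
    using norm_triangle_ineq[of "of_real b'" "(1 - of_real e) * z"] by (simp add: norm_mult)
  also have "\<dots> \<le> 1/2 + 1 * (3/2)"
    using b' e z by (intro add_mono mult_mono) auto
  finally show "of_real b' + (1 - of_real e) * z \<in> cball (0::complex) 2"
    by simp
  show "z + of_real b' \<in> cball (0::complex) 2"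
    using norm_triangle_ineq[of z "of_real b'"] z b' by auto
  have "dist (of_real b' + (1 - of_real e) * z) (z + of_real b') = e * norm z"
    using e by (simp add: dist_norm norm_mult algebra_simps)
  also have "\<dots> \<le> e * (3/2)"
    using e z by (intro mult_left_mono)
  finally show "dist (of_real b' + (1 - of_real e) * z) (z + of_real b') \<le> e * (3/2)" .
qed

lemma eventually_uniform_approx:
  fixes G :: "complex \<Rightarrow> complex" and P :: "real \<Rightarrow> real \<Rightarrow> nat \<Rightarrow> complex \<Rightarrow> complex"
    and \<epsilon> :: "'i \<Rightarrow> nat \<Rightarrow> real"
  assumes cont: "continuous_on (cball 0 2) G" and Z: "Z \<subseteq> cball 0 (3/2)" and \<eta>: "\<eta> \<le> 1/2"
    and d0: "0 < d0" "d0 \<le> 1" and B: "B \<longlonglongrightarrow> 0"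
    and est: "\<And>N e b' z. N \<ge> 1 \<Longrightarrow> 0 \<le> e \<Longrightarrow> e < d0 \<Longrightarrow> b' \<in> {-\<eta>..\<eta>} \<Longrightarrow> z \<in> Z \<Longrightarrow>
               norm (P b' e N z - G (of_real b' + (1 - of_real e) * z)) \<le> B N"
    and nonneg: "\<forall>i\<in>I. \<forall>N\<ge>1. 0 \<le> \<epsilon> i N" and small: "\<forall>d>0. \<forall>\<^sub>F N in sequentially. \<forall>i\<in>I. \<epsilon> i N < d"
    and r: "r > 0"
  shows "\<forall>\<^sub>F N in sequentially. \<forall>i\<in>I. \<forall>b'\<in>{-\<eta>..\<eta>}. \<forall>z\<in>Z. norm (P b' (\<epsilon> i N) N z - G (z + of_real b')) < r"
proof -
  have "uniformly_continuous_on (cball 0 2) G"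
    using cont by (intro compact_uniformly_continuous) auto
  then obtain d1 where d1: "d1 > 0"
    and G: "\<And>a b. a \<in> cball 0 2 \<Longrightarrow> b \<in> cball 0 2 \<Longrightarrow> dist a b < d1 \<Longrightarrow> dist (G a) (G b) < r/2"
    using r unfolding uniformly_continuous_on_def by (metis half_gt_zero)
  define d where "d = min d0 (d1 / 2)"
  have "d > 0"
    using d0 d1 by (simp add: d_def)
  then have "\<forall>\<^sub>F N in sequentially. N \<ge> 1 \<and> B N < r/2 \<and> (\<forall>i\<in>I. \<epsilon> i N < d)"
    using B r small by (intro eventually_conj eventually_ge_at_top order_tendstoD(2)) auto
  then show ?thesis
  proof (rule eventually_mono, intro ballI)
    fix N i b' z
    assume N: "N \<ge> 1 \<and> B N < r/2 \<and> (\<forall>i\<in>I. \<epsilon> i N < d)" and "i \<in> I" and b': "b' \<in> {-\<eta>..\<eta>}" and "z \<in> Z"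
    then have z: "norm z \<le> 3/2" and e: "0 \<le> \<epsilon> i N" "\<epsilon> i N < d0" "\<epsilon> i N < d1 / 2"
      using Z nonneg by (auto simp: d_def)
    define u where "u = of_real b' + (1 - of_real (\<epsilon> i N)) * z"
    have "\<bar>b'\<bar> \<le> 1/2"
      using b' \<eta> by auto
    note near = shrunk_point_bounds[OF this z e(1) order.trans[OF less_imp_le[OF e(2)] d0(2)], folded u_def]
    have "\<epsilon> i N * (3/2) \<le> d1 / 2 * (3/2)"
      using e by simp
    then have "dist (G u) (G (z + of_real b')) < r/2"
      using near d1 by (intro G) auto
    moreover have "norm (P b' (\<epsilon> i N) N z - G u) < r/2"
      using est[of N "\<epsilon> i N" b' z] N e b' \<open>z \<in> Z\<close> by (simp add: u_def)
    ultimately show "norm (P b' (\<epsilon> i N) N z - G (z + of_real b')) < r"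
      using norm_diff_triangle_less[of "P b' (\<epsilon> i N) N z" "G u" "r/2" "G (z + of_real b')" "r/2"]
      by (simp add: dist_norm)
  qed
qed

lemma PN_uniform_on_balls:
  fixes Gm Gp :: "complex \<Rightarrow> complex" and \<epsilon> :: "'i \<Rightarrow> nat \<Rightarrow> real"
  assumes hm: "Gm holomorphic_on UNIV" and hp: "Gp holomorphic_on UNIV"
    and \<eta>: "0 < \<eta>" "\<eta> < 1/2" and k: "2 \<le> real k * (1/2 - \<eta>)"
    and nonneg: "\<forall>i\<in>I. \<forall>N\<ge>1. 0 \<le> \<epsilon> i N" and small: "\<forall>d>0. \<forall>\<^sub>F N in sequentially. \<forall>i\<in>I. \<epsilon> i N < d"
  shows "(\<forall>K. compact K \<and> K \<subseteq> ball 0 (1 / (4^k + 1)) \<longrightarrow> (\<forall>e>0. \<forall>\<^sub>F N in sequentially.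
            \<forall>i\<in>I. \<forall>b'\<in>{-\<eta>..\<eta>}. \<forall>z\<in>K. norm (PN Gm Gp b' (\<epsilon> i N) N z - Gm (z + of_real b')) < e)) \<and>
         (\<forall>K. compact K \<and> K \<subseteq> ball 1 (1 / (4^k + 1)) \<longrightarrow> (\<forall>e>0. \<forall>\<^sub>F N in sequentially.
            \<forall>i\<in>I. \<forall>b'\<in>{-\<eta>..\<eta>}. \<forall>z\<in>K. norm (PN Gm Gp b' (\<epsilon> i N) N z - Gp (z + of_real b')) < e))"
proof -
  define \<delta> :: real where "\<delta> = 1 / (4^k + 1)"
  have holo: "Gm holomorphic_on cball 0 5" "Gp holomorphic_on cball 0 5"
    using hm hp by (auto intro: holomorphic_on_subset)
  then obtain M where M: "\<forall>u\<in>cball 0 5. norm (Gm u) \<le> M \<and> norm (Gp u) \<le> M"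
    using bounded_pair_on_compact[of "cball 0 5" Gm Gp] by (auto simp: holomorphic_on_imp_continuous_on)
  have B: "(\<lambda>N. 39 * M / real N + 2 * M * (1/2)^N) \<longlonglongrightarrow> 0"
    by (intro tendsto_add_zero lim_const_over_n tendsto_mult_right_zero LIMSEQ_power_zero) simp
  have cont: "continuous_on (cball 0 2) Gm" "continuous_on (cball 0 2) Gp"
    using hm hp by (auto intro: holomorphic_on_imp_continuous_on holomorphic_on_subset)
  have "ball 0 \<delta> \<subseteq> cball (0::complex) (1/2)" "ball 1 \<delta> \<subseteq> cball (1::complex) (1/2)"
    using inverse_four_pow_plus_one_le_half[of k] by (auto simp: \<delta>_def)
  moreover have "cball (1::complex) (1/2) \<subseteq> cball 0 (3/2)"
    by (intro cball_subset_cball_iff[THEN iffD2]) simp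
  ultimately have balls: "ball 0 \<delta> \<subseteq> cball (0::complex) (3/2)" "ball 1 \<delta> \<subseteq> cball (0::complex) (3/2)"
    by auto
  have "\<forall>\<^sub>F N in sequentially. \<forall>i\<in>I. \<forall>b'\<in>{-\<eta>..\<eta>}. \<forall>z\<in>K.
      norm (PN Gm Gp b' (\<epsilon> i N) N z - Gm (z + of_real b')) < e" if "K \<subseteq> ball 0 \<delta>" "e > 0" for K e
  proof (rule eventually_uniform_approx[OF cont(1) _ _ _ _ B _ nonneg small that(2)])
    show "\<And>N e b' z. 1 \<le> N \<Longrightarrow> 0 \<le> e \<Longrightarrow> e < 1 \<Longrightarrow> b' \<in> {-\<eta>..\<eta>} \<Longrightarrow> z \<in> K \<Longrightarrow>
        norm (PN Gm Gp b' e N z - Gm (of_real b' + (1 - of_real e) * z)) \<le> 39 * M / real N + 2 * M * (1/2)^N"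
      using k \<eta> that(1) by (intro PN_estimate_near_0[OF holo(1) M \<eta>, where k = k]) (auto simp: \<delta>_def)
  qed (use \<eta> that(1) balls in auto)
  moreover have "\<forall>\<^sub>F N in sequentially. \<forall>i\<in>I. \<forall>b'\<in>{-\<eta>..\<eta>}. \<forall>z\<in>K.
      norm (PN Gm Gp b' (\<epsilon> i N) N z - Gp (z + of_real b')) < e" if "K \<subseteq> ball 1 \<delta>" "e > 0" for K e
  proof (rule eventually_uniform_approx[OF cont(2) _ _ _ _ B _ nonneg small that(2)])
    show "\<And>N e b' z. 1 \<le> N \<Longrightarrow> 0 \<le> e \<Longrightarrow> e < (1/2 - \<eta>) / 2 \<Longrightarrow> b' \<in> {-\<eta>..\<eta>} \<Longrightarrow> z \<in> K \<Longrightarrow>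
        norm (PN Gm Gp b' e N z - Gp (of_real b' + (1 - of_real e) * z)) \<le> 39 * M / real N + 2 * M * (1/2)^N"
      using that(1) by (intro PN_estimate_near_1[OF holo(2) M \<eta> k]) (auto simp: \<delta>_def dist_norm norm_minus_commute)
  qed (use \<eta> that(1) balls in auto)
  ultimately show ?thesis
    unfolding \<delta>_def[symmetric] by blast
qed

lemma PN_uniform_on_balls_sequence:
  fixes Gm Gp :: "complex \<Rightarrow> complex" and \<epsilon> :: "nat \<Rightarrow> real"
  assumes "Gm holomorphic_on UNIV" and "Gp holomorphic_on UNIV"
    and "0 < \<eta>" "\<eta> < 1/2" and "2 \<le> real k * (1/2 - \<eta>)"
    and "\<forall>N\<ge>1. 0 \<le> \<epsilon> N" and "\<epsilon> \<longlonglongrightarrow> 0"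
  shows "(\<forall>K. compact K \<and> K \<subseteq> ball 0 (1 / (4^k + 1)) \<longrightarrow> (\<forall>e>0. \<forall>\<^sub>F N in sequentially.
            \<forall>b'\<in>{-\<eta>..\<eta>}. \<forall>z\<in>K. norm (PN Gm Gp b' (\<epsilon> N) N z - Gm (z + of_real b')) < e)) \<and>
         (\<forall>K. compact K \<and> K \<subseteq> ball 1 (1 / (4^k + 1)) \<longrightarrow> (\<forall>e>0. \<forall>\<^sub>F N in sequentially.
            \<forall>b'\<in>{-\<eta>..\<eta>}. \<forall>z\<in>K. norm (PN Gm Gp b' (\<epsilon> N) N z - Gp (z + of_real b')) < e))"
  using PN_uniform_on_balls[OF assms(1-5), of "{()}" "\<lambda>_. \<epsilon>"] assms(6,7) order_tendstoD(2)[OF assms(7)]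
  by simp

theorem mainTheorem3:
  fixes Gm Gp :: "complex \<Rightarrow> complex" and \<eta> :: real
  assumes "Gm holomorphic_on UNIV" and "Gp holomorphic_on UNIV"
    and "Gm (1/2) = Gp (1/2)"
    and "deriv Gm (1/2) \<noteq> deriv Gp (1/2)"
    and "0 < \<eta>" and "\<eta> < 1/2"
  shows "\<exists>Vm Vp :: complex set. open Vm \<and> 0 \<in> Vm \<and> open Vp \<and> 1 \<in> Vp \<and>
    (\<forall>\<epsilon> :: nat \<Rightarrow> real. (\<forall>N\<ge>1. 0 \<le> \<epsilon> N \<and> \<epsilon> N < 1) \<and> \<epsilon> \<longlonglongrightarrow> 0 \<longrightarrow>
       (\<forall>K. compact K \<and> K \<subseteq> Vm \<longrightarrow> (\<forall>e>0. \<forall>\<^sub>F N in sequentially.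
          \<forall>b'\<in>{-\<eta>..\<eta>}. \<forall>z\<in>K. norm (PN Gm Gp b' (\<epsilon> N) N z - Gm (z + of_real b')) < e)) \<and>
       (\<forall>K. compact K \<and> K \<subseteq> Vp \<longrightarrow> (\<forall>e>0. \<forall>\<^sub>F N in sequentially.
          \<forall>b'\<in>{-\<eta>..\<eta>}. \<forall>z\<in>K. norm (PN Gm Gp b' (\<epsilon> N) N z - Gp (z + of_real b')) < e))) \<and>
    (\<forall>(I :: 'i set) (\<epsilon> :: 'i \<Rightarrow> nat \<Rightarrow> real).
       (\<forall>i\<in>I. \<forall>N\<ge>1. 0 \<le> \<epsilon> i N \<and> \<epsilon> i N < 1) \<and>
       (\<forall>i\<in>I. \<epsilon> i \<longlonglongrightarrow> 0) \<and>
       (\<forall>d>0. \<forall>\<^sub>F N in sequentially. \<forall>i\<in>I. \<epsilon> i N < d) \<longrightarrow>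
       (\<forall>K. compact K \<and> K \<subseteq> Vm \<longrightarrow> (\<forall>e>0. \<forall>\<^sub>F N in sequentially.
          \<forall>i\<in>I. \<forall>b'\<in>{-\<eta>..\<eta>}. \<forall>z\<in>K. norm (PN Gm Gp b' (\<epsilon> i N) N z - Gm (z + of_real b')) < e)) \<and>
       (\<forall>K. compact K \<and> K \<subseteq> Vp \<longrightarrow> (\<forall>e>0. \<forall>\<^sub>F N in sequentially.
          \<forall>i\<in>I. \<forall>b'\<in>{-\<eta>..\<eta>}. \<forall>z\<in>K. norm (PN Gm Gp b' (\<epsilon> i N) N z - Gp (z + of_real b')) < e)))"
proof -
  obtain k :: nat where "2 / (1/2 - \<eta>) \<le> real k"
    using real_arch_simple by blast
  then have k: "2 \<le> real k * (1/2 - \<eta>)"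
    using assms(5,6) by (simp add: field_simps)
  define \<delta> :: real where "\<delta> = 1 / (4^k + 1)"
  have \<delta>: "\<delta> > 0"
    by (simp add: \<delta>_def add_pos_pos)
  note on_balls = PN_uniform_on_balls[OF assms(1,2,5,6) k, folded \<delta>_def]
    and on_balls_sequence = PN_uniform_on_balls_sequence[OF assms(1,2,5,6) k, folded \<delta>_def]
  show ?thesis
  proof (intro exI[of _ "ball 0 \<delta>", OF exI[of _ "ball 1 \<delta>"]] conjI)
    show "open (ball (0::complex) \<delta>)" "open (ball (1::complex) \<delta>)"
      "(0::complex) \<in> ball 0 \<delta>" "(1::complex) \<in> ball 1 \<delta>"
      using \<delta> by simp_all
  qed (intro allI impI; elim conjE; (rule on_balls | rule on_balls_sequence); auto)+
qed

end
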